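(* For every $d \geq 1$ and $\varepsilon \leq \frac{1}{2}$, every algorithm for robust mean estimation of $d$-dimensional distributions with covariance $\Sigma \preceq \sigma^2 I$ in the population limit has, on some input, error \[ \mathbb{E}[\|\widehat{\mu} - \mu\|] \geq JUNG_d \cdot (1 + O(\varepsilon)) \cdot \sqrt{2\sigma^2\varepsilon}, \] where the $O(\cdot)$ hides an absolute constant (i.e. the bound is at least $JUNG_d(1-c\varepsilon)\sqrt{2\sigma^2\varepsilon}$ for an absolute constant $c$).
   Context: $JUNG_d := \sqrt{\frac{2d}{d+1}}$. Robust mean estimation in the population limit: there is an unknown true distribution $D$ on $\mathbb{R}^d$ with mean $\mu$ and covariance $\Sigma \preceq \sigma^2 I$; an adversary replaces it by any distribution $D'$ with total variation distance $TV(D, D') \leq \varepsilon$. The (possibly randomized) algorithm is given $\varepsilon$, $\sigma^2$ and the distribution $D'$ itself (not samples), and outputs $\widehat{\mu} \in \mathbb{R}^d$; its error is $\mathbb{E}\|\widehat{\mu} - \mu\|$, the expectation over the algorithm's randomness. "On some input" means there exist $\sigma$, such a $D$ and such a $D'$ for which the stated lower bound holds. *)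

theory Defs
  imports "HOL-Probability.Probability"
begin

text \<open>Points of R^d are represented as extensional functions on the index set {..<d}
  (elements of PiE {..<d} (\<lambda>_. UNIV)); the Borel sigma-algebra of R^d is the
  product sigma-algebra.\<close>

definition Rd :: "nat \<Rightarrow> (nat \<Rightarrow> real) measure" where
  "Rd d = PiM {..<d} (\<lambda>_. (borel :: real measure))"

definition distr_on :: "nat \<Rightarrow> (nat \<Rightarrow> real) measure \<Rightarrow> bool" where
  "distr_on d M \<longleftrightarrow> prob_space M \<and> sets M = sets (Rd d)"

definition vdist :: "nat \<Rightarrow> (nat \<Rightarrow> real) \<Rightarrow> (nat \<Rightarrow> real) \<Rightarrow> real" where
  "vdist d x y = sqrt (\<Sum>i<d. (x i - y i)\<^sup>2)"

definition finite_second_moments :: "nat \<Rightarrow> (nat \<Rightarrow> real) measure \<Rightarrow> bool" where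
  "finite_second_moments d M \<longleftrightarrow> (\<forall>i<d. integrable M (\<lambda>x. (x i)\<^sup>2))"

definition mean :: "nat \<Rightarrow> (nat \<Rightarrow> real) measure \<Rightarrow> (nat \<Rightarrow> real)" where
  "mean d M = (\<lambda>i\<in>{..<d}. \<integral>x. x i \<partial>M)"

definition cov :: "nat \<Rightarrow> (nat \<Rightarrow> real) measure \<Rightarrow> nat \<Rightarrow> nat \<Rightarrow> real" where
  "cov d M i j = (\<integral>x. (x i - mean d M i) * (x j - mean d M j) \<partial>M)"

definition cov_le :: "nat \<Rightarrow> (nat \<Rightarrow> real) measure \<Rightarrow> real \<Rightarrow> bool" where
  "cov_le d M s \<longleftrightarrow>
     (\<forall>v :: nat \<Rightarrow> real. (\<Sum>i<d. \<Sum>j<d. v i * cov d M i j * v j) \<le> s * (\<Sum>i<d. (v i)\<^sup>2))"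

definition tv :: "'a measure \<Rightarrow> 'a measure \<Rightarrow> real" where
  "tv M N = (SUP A \<in> sets M. \<bar>measure M A - measure N A\<bar>)"

definition jung :: "nat \<Rightarrow> real" where
  "jung d = sqrt (2 * real d / (real d + 1))"

end

theory Submission
  imports Defs
begin

(* Le Cam's method with m + 1 hypotheses. Let s_0, ..., s_m be the vertices of a regular
  simplex in R^m (m <= d) centred at 0 with |s_k|^2 = m/(m+1). The corrupted distribution D'
  puts mass 1 - (m+1) eps at 0 and mass eps at each -s_k; the true distribution D_k is D' with
  the atom at -s_k moved to s_k. Then TV(D_k, D') <= eps, Cov(D_k) <= eps I because the s_k
  form a tight frame, and mean(D_k) = 2 eps s_k. These means lie on the sphere of radius
  rho = 2 eps sqrt(m/(m+1)) around their centroid 0, so every y has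
  sum_k |y - mean(D_k)| >= (m+1) rho, and whatever the algorithm outputs on D' has expected
  error at least rho for some k. With m + 1 = min (d+1) (floor (1/eps)) one gets
  rho >= JUNG_d (1 - 2 eps) sqrt(2 sigma^2 eps) for sigma^2 = eps. *)

(* The restriction puts every atom into the extensional space of Rd d, whatever f does
  outside {..<d}. *)
definition discrete_Rd :: "nat \<Rightarrow> 'a pmf \<Rightarrow> ('a \<Rightarrow> nat \<Rightarrow> real) \<Rightarrow> (nat \<Rightarrow> real) measure" where
  "discrete_Rd d q f = distr (measure_pmf q) (Rd d) (\<lambda>a. restrict (f a) {..<d})"

lemma measurable_component_Rd [measurable]: "i < d \<Longrightarrow> (\<lambda>x. x i) \<in> borel_measurable (Rd d)"
  unfolding Rd_def by measurable

lemma vdist_eq_L2_set: "vdist d x y = L2_set (\<lambda>i. x i - y i) {..<d}"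
  by (simp add: vdist_def L2_set_def)

lemma borel_measurable_vdist [measurable]: "(\<lambda>y. vdist d y z) \<in> borel_measurable (Rd d)"
  unfolding vdist_def by measurable

lemma measurable_restrict_Rd: "(\<lambda>a. restrict (f a) {..<d}) \<in> measurable (measure_pmf q) (Rd d)"
  by (simp add: Rd_def space_PiM)

lemma sets_discrete_Rd [simp]: "sets (discrete_Rd d q f) = sets (Rd d)"
  by (simp add: discrete_Rd_def)

lemma distr_on_discrete_Rd: "distr_on d (discrete_Rd d q f)"
  unfolding distr_on_def discrete_Rd_def
  by (auto intro: measure_pmf.prob_space_distr measurable_restrict_Rd)

lemma integral_discrete_Rd:
  assumes "finite A" "set_pmf q \<subseteq> A" "g \<in> borel_measurable (Rd d)"
  shows "(\<integral>x. g x \<partial>discrete_Rd d q f) = (\<Sum>a\<in>A. pmf q a * g (restrict (f a) {..<d}))"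
  unfolding discrete_Rd_def using assms
  by (subst integral_distr[OF measurable_restrict_Rd assms(3)], subst integral_measure_pmf_real)
    (auto simp: mult.commute)

lemma finite_second_moments_discrete_Rd:
  "finite (set_pmf q) \<Longrightarrow> finite_second_moments d (discrete_Rd d q f)"
  unfolding finite_second_moments_def discrete_Rd_def
  by (auto simp: integrable_distr_eq[OF measurable_restrict_Rd]
      intro: integrable_measure_pmf_finite)

lemma mean_discrete_Rd:
  assumes "finite A" "set_pmf q \<subseteq> A" "i < d"
  shows "mean d (discrete_Rd d q f) i = (\<Sum>a\<in>A. pmf q a * f a i)"
  using assms by (simp add: mean_def integral_discrete_Rd)

lemma covariance_form_le_second_moment:
  fixes w :: "'a \<Rightarrow> real" and p :: "'a \<Rightarrow> nat \<Rightarrow> real"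
  assumes "finite A" "(\<Sum>a\<in>A. w a) = 1" and \<mu>: "\<And>i. i < d \<Longrightarrow> \<mu> i = (\<Sum>a\<in>A. w a * p a i)"
  shows "(\<Sum>i<d. \<Sum>j<d. v i * (\<Sum>a\<in>A. w a * ((p a i - \<mu> i) * (p a j - \<mu> j))) * v j)
    \<le> (\<Sum>a\<in>A. w a * (\<Sum>i<d. v i * p a i)\<^sup>2)"
proof -
  define P where "P a = (\<Sum>i<d. v i * p a i)" for a
  define c where "c = (\<Sum>i<d. v i * \<mu> i)"
  have "(\<Sum>a\<in>A. w a * P a) = (\<Sum>i<d. v i * (\<Sum>a\<in>A. w a * p a i))"
    by (simp add: P_def sum_distrib_left sum.swap[of _ A] mult_ac)
  also have "\<dots> = c"
    by (simp add: c_def \<mu>)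
  finally have "(\<Sum>a\<in>A. w a * P a) = c" .
  moreover have "(\<Sum>i<d. \<Sum>j<d. v i * (\<Sum>a\<in>A. w a * ((p a i - \<mu> i) * (p a j - \<mu> j))) * v j)
      = (\<Sum>a\<in>A. w a * (P a - c)\<^sup>2)"
    by (simp add: P_def c_def power2_eq_square sum_product sum_distrib_left sum_distrib_right
        sum.swap[of _ A] sum_subtractf[symmetric] algebra_simps)
  moreover have "(\<Sum>a\<in>A. w a * (P a - c)\<^sup>2)
      = (\<Sum>a\<in>A. w a * (P a)\<^sup>2) - 2 * c * (\<Sum>a\<in>A. w a * P a) + c\<^sup>2 * (\<Sum>a\<in>A. w a)"
    by (simp add: power2_diff algebra_simps sum.distrib sum_subtractf sum_distrib_left
        sum_distrib_right)
  ultimately show ?thesis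
    using assms(2) by (simp add: P_def power2_eq_square)
qed

lemma cov_le_discrete_Rd:
  assumes "finite A" "set_pmf q \<subseteq> A"
    and second_moment: "\<And>v. (\<Sum>a\<in>A. pmf q a * (\<Sum>i<d. v i * f a i)\<^sup>2) \<le> s * (\<Sum>i<d. (v i)\<^sup>2)"
  shows "cov_le d (discrete_Rd d q f) s"
  unfolding cov_le_def
proof
  fix v :: "nat \<Rightarrow> real"
  let ?\<mu> = "mean d (discrete_Rd d q f)"
  have "(\<Sum>i<d. \<Sum>j<d. v i * cov d (discrete_Rd d q f) i j * v j)
      = (\<Sum>i<d. \<Sum>j<d. v i * (\<Sum>a\<in>A. pmf q a * ((f a i - ?\<mu> i) * (f a j - ?\<mu> j))) * v j)"
    using assms(1,2) by (simp add: cov_def integral_discrete_Rd)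
  also have "\<dots> \<le> (\<Sum>a\<in>A. pmf q a * (\<Sum>i<d. v i * f a i)\<^sup>2)"
    using assms(1,2)
    by (intro covariance_form_le_second_moment) (auto simp: sum_pmf_eq_1 mean_discrete_Rd)
  finally show "(\<Sum>i<d. \<Sum>j<d. v i * cov d (discrete_Rd d q f) i j * v j) \<le> s * (\<Sum>i<d. (v i)\<^sup>2)"
    using second_moment[of v] by (rule order_trans)
qed

lemma measure_pmf_diff_le_pmf:
  assumes "X - {b} = Y - {b}"
  shows "\<bar>measure_pmf.prob q X - measure_pmf.prob q Y\<bar> \<le> pmf q b"
proof -
  have "measure_pmf.prob q Z = measure_pmf.prob q (Z - {b}) + measure_pmf.prob q (Z \<inter> {b})" for Z
    by (simp add: measure_pmf.finite_measure_Diff')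
  moreover have "measure_pmf.prob q (Z \<inter> {b}) \<le> pmf q b" for Z
    by (metis measure_pmf.finite_measure_mono inf_le2 measure_pmf_single sets_measure_pmf UNIV_I)
  ultimately show ?thesis
    using assms measure_nonneg[of q "X \<inter> {b}"] measure_nonneg[of q "Y \<inter> {b}"] by (smt (verit))
qed

lemma tv_discrete_Rd_le:
  assumes "\<And>a. a \<noteq> b \<Longrightarrow> f a = g a"
  shows "tv (discrete_Rd d q f) (discrete_Rd d q g) \<le> pmf q b"
  unfolding tv_def
proof (rule cSUP_least)
  fix S assume "S \<in> sets (discrete_Rd d q f)"
  then have "S \<in> sets (Rd d)" by simp
  moreover have "(\<lambda>a. restrict (f a) {..<d}) -` S - {b} = (\<lambda>a. restrict (g a) {..<d}) -` S - {b}"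
    using assms by auto
  ultimately show "\<bar>measure (discrete_Rd d q f) S - measure (discrete_Rd d q g) S\<bar> \<le> pmf q b"
    unfolding discrete_Rd_def
    by (simp add: measure_distr[OF measurable_restrict_Rd] measure_pmf_diff_le_pmf)
qed (use sets.top in blast)

(* Cauchy-Schwarz against u k gives r^2 <= r |y - u k| + <y, u k>, and the inner products
  cancel in the sum over k. *)
lemma card_mul_le_sum_L2_set_dist:
  fixes u :: "'k \<Rightarrow> 'i \<Rightarrow> real"
  assumes "finite K" and centred: "\<And>i. i \<in> I \<Longrightarrow> (\<Sum>k\<in>K. u k i) = 0"
    and radius: "\<And>k. k \<in> K \<Longrightarrow> L2_set (u k) I = r"
  shows "real (card K) * r \<le> (\<Sum>k\<in>K. L2_set (\<lambda>i. y i - u k i) I)"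
proof (cases "K = {}")
  case False
  have bound: "r * r \<le> r * L2_set (\<lambda>i. y i - u k i) I + (\<Sum>i\<in>I. y i * u k i)" if "k \<in> K" for k
  proof -
    have "r * r = (\<Sum>i\<in>I. (u k i)\<^sup>2)"
      using radius[OF that] by (auto simp: L2_set_def sum_nonneg)
    also have "\<dots> = (\<Sum>i\<in>I. (u k i - y i) * u k i) + (\<Sum>i\<in>I. y i * u k i)"
      by (simp add: power2_eq_square algebra_simps flip: sum.distrib)
    also have "(\<Sum>i\<in>I. (u k i - y i) * u k i) \<le> (\<Sum>i\<in>I. \<bar>y i - u k i\<bar> * \<bar>u k i\<bar>)"
      by (intro sum_mono) (metis abs_ge_self abs_minus_commute abs_mult)
    also have "\<dots> \<le> L2_set (\<lambda>i. y i - u k i) I * r"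
      using L2_set_mult_ineq radius[OF that] by metis
    finally show ?thesis by (simp add: mult.commute)
  qed
  have "(\<Sum>k\<in>K. r * r) \<le> (\<Sum>k\<in>K. r * L2_set (\<lambda>i. y i - u k i) I + (\<Sum>i\<in>I. y i * u k i))"
    by (rule sum_mono) (rule bound)
  moreover have "(\<Sum>k\<in>K. \<Sum>i\<in>I. y i * u k i) = 0"
    by (subst sum.swap) (simp add: centred flip: sum_distrib_left)
  ultimately have "r * (real (card K) * r) \<le> r * (\<Sum>k\<in>K. L2_set (\<lambda>i. y i - u k i) I)"
    by (simp add: sum.distrib sum_distrib_left mult_ac)
  moreover have "0 \<le> r"
    using False radius L2_set_nonneg by blast
  ultimately show ?thesis
    by (cases "r = 0") (auto simp: sum_nonneg)
qed simp

lemma exists_nn_integral_ge_average: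
  assumes "prob_space M" "finite K" "K \<noteq> {}"
    and measurable: "\<And>k. k \<in> K \<Longrightarrow> g k \<in> borel_measurable M"
    and nonneg: "\<And>k y. 0 \<le> g k y"
    and average: "\<And>y. y \<in> space M \<Longrightarrow> real (card K) * r \<le> (\<Sum>k\<in>K. g k y)"
  obtains k where "k \<in> K" "ennreal r \<le> (\<integral>\<^sup>+ y. ennreal (g k y) \<partial>M)"
proof -
  define F where "F k = (\<integral>\<^sup>+ y. ennreal (g k y) \<partial>M)" for k
  have "Max (F ` K) \<in> F ` K"
    using assms(2,3) by simp
  then obtain k where k: "k \<in> K" "F k = Max (F ` K)"
    by (metis imageE)
  have "of_nat (card K) * ennreal r = (\<integral>\<^sup>+ y. ennreal (real (card K) * r) \<partial>M)"
    using prob_space.emeasure_space_1[OF assms(1)]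
    by (simp add: ennreal_mult' ennreal_of_nat_eq_real_of_nat)
  also have "\<dots> \<le> (\<integral>\<^sup>+ y. ennreal (\<Sum>k\<in>K. g k y) \<partial>M)"
    by (intro nn_integral_mono ennreal_leI average)
  also have "\<dots> = (\<Sum>k\<in>K. F k)"
    by (simp add: F_def nonneg measurable nn_integral_sum flip: sum_ennreal)
  also have "\<dots> \<le> of_nat (card K) * F k"
    using k assms(2) by (intro sum_bounded_above) simp
  finally show ?thesis
    using that k assms(2,3) by (simp add: ennreal_mult_le_mult_iff F_def)
qed

(* The first m vertices are e_k - t (1, ..., 1) and the last one is u (1, ..., 1), with
  u = simplex_apex m and t = simplex_shift m chosen so that the vertices sum to 0 and have equal
  norms. Coordinates i >= m vanish, so the simplex sits in every R^n with n >= m. *)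
definition simplex_apex :: "nat \<Rightarrow> real" where
  "simplex_apex m = - 1 / sqrt (real m + 1)"

definition simplex_shift :: "nat \<Rightarrow> real" where
  "simplex_shift m = (1 + simplex_apex m) / real m"

definition simplex_vertex :: "nat \<Rightarrow> nat \<Rightarrow> nat \<Rightarrow> real" where
  "simplex_vertex m k i =
    (if i < m then if k < m then of_bool (i = k) - simplex_shift m else simplex_apex m else 0)"

lemma simplex_apex_squared: "(simplex_apex m)\<^sup>2 = 1 / (real m + 1)"
  by (simp add: simplex_apex_def power_divide)

lemma simplex_shift_equation:
  assumes "1 \<le> m"
  shows "real m * (simplex_shift m)\<^sup>2 - 2 * simplex_shift m + (simplex_apex m)\<^sup>2 = 0"
proof -
  have "real m * (simplex_shift m)\<^sup>2 - 2 * simplex_shift m + (simplex_apex m)\<^sup>2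
      = ((real m + 1) * (simplex_apex m)\<^sup>2 - 1) / real m"
    using assms by (simp add: simplex_shift_def field_simps power2_eq_square)
  then show ?thesis
    by (simp add: simplex_apex_squared)
qed

lemma sum_simplex_vertex:
  assumes "1 \<le> m"
  shows "(\<Sum>k\<le>m. simplex_vertex m k i) = 0"
proof (cases "i < m")
  case True
  then have "(\<Sum>k\<le>m. simplex_vertex m k i) = 1 - real m * simplex_shift m + simplex_apex m"
    by (simp add: simplex_vertex_def sum_subtractf flip: lessThan_Suc_atMost)
  also have "\<dots> = 0"
    using assms by (simp add: simplex_shift_def)
  finally show ?thesis .
qed (simp add: simplex_vertex_def)

lemma sum_simplex_vertex_pad:
  "m \<le> n \<Longrightarrow> (\<Sum>i<n. f i * simplex_vertex m k i) = (\<Sum>i<m. f i * simplex_vertex m k i)"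
  by (rule sum.mono_neutral_right) (auto simp: simplex_vertex_def)

lemma simplex_vertex_norm:
  assumes "1 \<le> m" "k \<le> m"
  shows "(\<Sum>i<m. (simplex_vertex m k i)\<^sup>2) = real m / (real m + 1)"
proof (cases "k < m")
  case True
  have "(\<Sum>i<m. (simplex_vertex m k i)\<^sup>2)
      = (\<Sum>i<m. of_bool (i = k) * (1 - 2 * simplex_shift m) + (simplex_shift m)\<^sup>2)"
    by (rule sum.cong) (auto simp: simplex_vertex_def True power2_eq_square algebra_simps)
  also have "\<dots> = 1 - (simplex_apex m)\<^sup>2"
    using True simplex_shift_equation[OF assms(1)] by (simp add: sum.distrib)
  finally show ?thesis
    by (simp add: simplex_apex_squared field_simps)
next
  case False
  with assms(2) show ?thesis
    by (simp add: simplex_vertex_def simplex_apex_squared)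
qed

lemma simplex_vertex_tight_frame:
  assumes "1 \<le> m"
  shows "(\<Sum>k\<le>m. (\<Sum>i<m. v i * simplex_vertex m k i)\<^sup>2) = (\<Sum>i<m. (v i)\<^sup>2)"
proof -
  define S where "S = (\<Sum>i<m. v i)"
  have "(\<Sum>i<m. v i * simplex_vertex m k i) = v k - simplex_shift m * S" if "k < m" for k
    using that by (simp add: simplex_vertex_def S_def algebra_simps sum_subtractf sum_distrib_left)
  moreover have "(\<Sum>i<m. v i * simplex_vertex m m i) = simplex_apex m * S"
    by (simp add: simplex_vertex_def S_def sum_distrib_left mult.commute)
  ultimately have "(\<Sum>k\<le>m. (\<Sum>i<m. v i * simplex_vertex m k i)\<^sup>2)
      = (\<Sum>k<m. (v k - simplex_shift m * S)\<^sup>2) + (simplex_apex m * S)\<^sup>2"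
    by (simp flip: lessThan_Suc_atMost)
  also have "\<dots> = (\<Sum>k<m. (v k)\<^sup>2)
      + S\<^sup>2 * (real m * (simplex_shift m)\<^sup>2 - 2 * simplex_shift m + (simplex_apex m)\<^sup>2)"
    by (simp add: power2_diff sum.distrib sum_subtractf sum_distrib_left S_def algebra_simps
        power2_eq_square)
  finally show ?thesis
    using simplex_shift_equation[OF assms] by simp
qed

definition simplex_pmf :: "nat \<Rightarrow> real \<Rightarrow> nat pmf" where
  "simplex_pmf m e =
    embed_pmf (\<lambda>a. if a = 0 then 1 - real (m + 1) * e else if a \<le> Suc m then e else 0)"

definition signed_vertex :: "nat \<Rightarrow> nat set \<Rightarrow> nat \<Rightarrow> nat \<Rightarrow> real" where
  "signed_vertex m F a i =
    (case a of 0 \<Rightarrow> 0 | Suc k \<Rightarrow> (if k \<in> F then 1 else - 1) * simplex_vertex m k i)"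

definition signed_simplex :: "nat \<Rightarrow> nat \<Rightarrow> real \<Rightarrow> nat set \<Rightarrow> (nat \<Rightarrow> real) measure" where
  "signed_simplex d m e F = discrete_Rd d (simplex_pmf m e) (signed_vertex m F)"

lemma distr_on_signed_simplex: "distr_on d (signed_simplex d m e F)"
  by (simp add: signed_simplex_def distr_on_discrete_Rd)

context
  fixes m :: nat and e :: real
  assumes e_nonneg: "0 \<le> e" and total_mass: "real (m + 1) * e \<le> 1"
begin

lemma pmf_simplex_pmf:
  "pmf (simplex_pmf m e) a = (if a = 0 then 1 - real (m + 1) * e else if a \<le> Suc m then e else 0)"
  unfolding simplex_pmf_def
proof (rule pmf_embed_pmf)
  let ?w = "\<lambda>a. if a = 0 then 1 - real (m + 1) * e else if a \<le> Suc m then e else 0"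
  show "0 \<le> ?w a" for a
    using e_nonneg total_mass by simp
  have "(\<integral>\<^sup>+ a. ennreal (?w a) \<partial>count_space UNIV) = (\<Sum>a\<le>Suc m. ennreal (?w a))"
    by (rule nn_integral_count_space') auto
  also have "\<dots> = ennreal (\<Sum>a\<le>Suc m. ?w a)"
    using e_nonneg total_mass by (intro sum_ennreal) auto
  also have "(\<Sum>a\<le>Suc m. ?w a) = 1"
    by (simp add: sum.atMost_Suc_shift del: sum.atMost_Suc)
  finally show "(\<integral>\<^sup>+ a. ennreal (?w a) \<partial>count_space UNIV) = 1"
    by simp
qed

lemma set_simplex_pmf: "set_pmf (simplex_pmf m e) \<subseteq> {..Suc m}"
  by (auto simp: set_pmf_iff pmf_simplex_pmf split: if_splits)

lemma sum_simplex_pmf: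
  "(\<Sum>a\<le>Suc m. pmf (simplex_pmf m e) a * f a) = (1 - real (m + 1) * e) * f 0 + e * (\<Sum>k\<le>m. f (Suc k))"
  by (simp add: sum.atMost_Suc_shift pmf_simplex_pmf sum_distrib_left del: sum.atMost_Suc)

lemma finite_second_moments_signed_simplex: "finite_second_moments d (signed_simplex d m e F)"
  unfolding signed_simplex_def
  by (rule finite_second_moments_discrete_Rd) (rule finite_subset[OF set_simplex_pmf], simp)

lemma tv_signed_simplex_insert:
  "tv (signed_simplex d m e (insert k F)) (signed_simplex d m e F) \<le> e"
proof -
  have "tv (signed_simplex d m e (insert k F)) (signed_simplex d m e F)
      \<le> pmf (simplex_pmf m e) (Suc k)"
    unfolding signed_simplex_def
    by (rule tv_discrete_Rd_le) (auto simp: signed_vertex_def split: nat.split)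
  also have "\<dots> \<le> e"
    using e_nonneg by (simp add: pmf_simplex_pmf)
  finally show ?thesis .
qed

lemma mean_signed_simplex_singleton:
  assumes "1 \<le> m" "k \<le> m" "i < d"
  shows "mean d (signed_simplex d m e {k}) i = 2 * e * simplex_vertex m k i"
proof -
  have "mean d (signed_simplex d m e {k}) i
      = (\<Sum>a\<le>Suc m. pmf (simplex_pmf m e) a * signed_vertex m {k} a i)"
    using assms(3) set_simplex_pmf
    by (simp add: signed_simplex_def mean_discrete_Rd del: sum.atMost_Suc)
  also have "\<dots> = e * (\<Sum>j\<le>m. (if j = k then 1 else - 1) * simplex_vertex m j i)"
    by (simp add: sum_simplex_pmf signed_vertex_def del: sum.atMost_Suc)
  also have "(\<Sum>j\<le>m. (if j = k then 1 else - 1) * simplex_vertex m j i)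
      = (\<Sum>j\<le>m. (if j = k then 2 * simplex_vertex m j i else 0) - simplex_vertex m j i)"
    by (rule sum.cong) auto
  also have "\<dots> = 2 * simplex_vertex m k i"
    using assms(1,2) by (simp add: sum_subtractf sum_simplex_vertex)
  finally show ?thesis by simp
qed

lemma cov_le_signed_simplex:
  assumes "1 \<le> m" "m \<le> d"
  shows "cov_le d (signed_simplex d m e F) e"
  unfolding signed_simplex_def
proof (rule cov_le_discrete_Rd[OF _ set_simplex_pmf])
  fix v :: "nat \<Rightarrow> real"
  have "(\<Sum>i<d. v i * signed_vertex m F (Suc k) i)
      = (if k \<in> F then 1 else - 1) * (\<Sum>i<d. v i * simplex_vertex m k i)" for k
    by (simp add: signed_vertex_def sum_distrib_left mult_ac)
  then have "(\<Sum>i<d. v i * signed_vertex m F (Suc k) i)\<^sup>2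
      = (\<Sum>i<m. v i * simplex_vertex m k i)\<^sup>2" for k
    by (simp add: power_mult_distrib sum_simplex_vertex_pad[OF assms(2)])
  then have "(\<Sum>a\<le>Suc m. pmf (simplex_pmf m e) a * (\<Sum>i<d. v i * signed_vertex m F a i)\<^sup>2)
      = e * (\<Sum>i<m. (v i)\<^sup>2)"
    using assms(1)
    by (simp add: sum_simplex_pmf signed_vertex_def simplex_vertex_tight_frame del: sum.atMost_Suc)
  also have "\<dots> \<le> e * (\<Sum>i<d. (v i)\<^sup>2)"
    using e_nonneg assms(2) by (intro mult_left_mono sum_mono2) auto
  finally show "(\<Sum>a\<le>Suc m. pmf (simplex_pmf m e) a * (\<Sum>i<d. v i * signed_vertex m F a i)\<^sup>2)
      \<le> e * (\<Sum>i<d. (v i)\<^sup>2)" .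
qed simp

end

lemma exists_far_signed_simplex_mean:
  assumes "1 \<le> m" "m \<le> d" "0 \<le> e" "real (m + 1) * e \<le> 1" "distr_on d M"
  obtains k where "k \<le> m"
    "ennreal (2 * e * sqrt (real m / (real m + 1)))
      \<le> (\<integral>\<^sup>+ y. ennreal (vdist d y (mean d (signed_simplex d m e {k}))) \<partial>M)"
proof -
  define \<rho> where "\<rho> = 2 * e * sqrt (real m / (real m + 1))"
  define u where "u k i = 2 * e * simplex_vertex m k i" for k i
  have dist: "vdist d y (mean d (signed_simplex d m e {k})) = L2_set (\<lambda>i. y i - u k i) {..<d}"
    if "k \<le> m" for k y
    unfolding vdist_eq_L2_set
    by (rule L2_set_cong) (use that assms in \<open>simp_all add: u_def mean_signed_simplex_singleton\<close>)
  have radius: "L2_set (u k) {..<d} = \<rho>" if "k \<le> m" for k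
  proof -
    have "(\<Sum>i<d. (u k i)\<^sup>2) = (2 * e)\<^sup>2 * (\<Sum>i<d. simplex_vertex m k i * simplex_vertex m k i)"
      by (simp add: u_def power_mult_distrib power2_eq_square[of "simplex_vertex _ _ _"]
          sum_distrib_left)
    also have "\<dots> = (2 * e)\<^sup>2 * (real m / (real m + 1))"
      using simplex_vertex_norm[OF assms(1) that]
      by (simp add: sum_simplex_vertex_pad[OF assms(2)] power2_eq_square)
    finally have "L2_set (u k) {..<d} = sqrt ((2 * e)\<^sup>2) * sqrt (real m / (real m + 1))"
      by (simp only: L2_set_def real_sqrt_mult)
    then show ?thesis
      using assms(3) by (simp only: real_sqrt_abs) (simp add: \<rho>_def)
  qed
  have centred: "(\<Sum>k\<le>m. u k i) = 0" for i
    using assms(1) by (simp add: u_def sum_simplex_vertex flip: sum_distrib_left)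
  have sets_M: "sets M = sets (Rd d)"
    using assms(5) by (simp add: distr_on_def)
  have measurable: "(\<lambda>y. vdist d y z) \<in> borel_measurable M" for z
    unfolding measurable_cong_sets[OF sets_M refl] by (rule borel_measurable_vdist)
  show ?thesis
  proof (rule exists_nn_integral_ge_average[of M "{..m}"])
    show "prob_space M"
      using assms(5) by (simp add: distr_on_def)
    show "real (card {..m}) * \<rho> \<le> (\<Sum>k\<le>m. vdist d y (mean d (signed_simplex d m e {k})))" for y
      using card_mul_le_sum_L2_set_dist[of "{..m}" "{..<d}" u \<rho> y] centred radius
      by (simp add: dist)
  qed (use that measurable in \<open>auto simp: \<rho>_def vdist_def sum_nonneg\<close>)
qed

(* m + 1 = min (d + 1) (floor (1/e)) is small enough for the masses to fit and, when m < d,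
  large enough that 1/(m+1) <= 2 e. *)
lemma exists_simplex_dimension:
  assumes "1 \<le> d" "0 < e" "e \<le> 1 / 2"
  obtains m where "1 \<le> m" "m \<le> d" "real (m + 1) * e \<le> 1"
    "(1 - 2 * e) * sqrt (real d / (real d + 1)) \<le> sqrt (real m / (real m + 1))"
proof -
  define N where "N = nat \<lfloor>1 / e\<rfloor>"
  have "2 \<le> 1 / e"
    using assms(2,3) by (simp add: field_simps)
  then have N: "2 \<le> N" "real N \<le> 1 / e" "1 / e - 1 < real N"
    unfolding N_def by linarith+
  define m where "m = min d (N - 1)"
  have d_ratio: "sqrt (real d / (real d + 1)) \<le> 1"
    by simp
  show ?thesis
  proof (rule that)
    show "1 \<le> m" "m \<le> d"
      using assms(1) N(1) by (auto simp: m_def)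
    have "real (m + 1) \<le> 1 / e"
      using N(1,2) by (simp add: m_def)
    then show "real (m + 1) * e \<le> 1"
      using assms(2) by (simp add: field_simps)
    show "(1 - 2 * e) * sqrt (real d / (real d + 1)) \<le> sqrt (real m / (real m + 1))"
    proof (cases "m = d")
      case True
      have "(1 - 2 * e) * sqrt (real d / (real d + 1)) \<le> 1 * sqrt (real d / (real d + 1))"
        using assms(2) by (intro mult_right_mono) auto
      with True show ?thesis
        by simp
    next
      case False
      then have "real m + 1 = real N"
        using N(1) by (simp add: m_def)
      moreover have "1 / (2 * e) \<le> real N"
        using N(3) assms(2,3) by (simp add: field_simps)
      ultimately have "1 - 2 * e \<le> real m / (real m + 1)"
        using assms(2) N(1) by (simp add: field_simps)
      moreover have "(1 - 2 * e)\<^sup>2 \<le> 1 - 2 * e"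
        using assms(2,3) by (simp add: power2_eq_square mult_left_le)
      ultimately have "1 - 2 * e \<le> sqrt (real m / (real m + 1))"
        by (intro real_le_rsqrt) linarith
      moreover have "(1 - 2 * e) * sqrt (real d / (real d + 1)) \<le> 1 - 2 * e"
        using assms(3) d_ratio by (intro mult_left_le) auto
      ultimately show ?thesis
        by linarith
    qed
  qed
qed

lemma jung_bound_le_simplex_radius:
  assumes "0 \<le> e" "(1 - 2 * e) * sqrt (real d / (real d + 1)) \<le> sqrt (real m / (real m + 1))"
  shows "jung d * (1 - 2 * e) * sqrt (2 * e * e) \<le> 2 * e * sqrt (real m / (real m + 1))"
proof -
  have "jung d = sqrt 2 * sqrt (real d / (real d + 1))"
    unfolding jung_def by (simp flip: real_sqrt_mult)
  moreover have "sqrt (2 * e * e) = sqrt 2 * e"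
    using assms(1) by (simp add: real_sqrt_mult mult.assoc)
  ultimately have "jung d * (1 - 2 * e) * sqrt (2 * e * e)
      = 2 * e * ((1 - 2 * e) * sqrt (real d / (real d + 1)))"
    by (simp add: mult_ac)
  also have "\<dots> \<le> 2 * e * sqrt (real m / (real m + 1))"
    using assms by (simp add: mult_left_mono)
  finally show ?thesis .
qed

theorem theorem2:
  shows "\<exists>c::real. \<forall>d::nat. \<forall>\<epsilon>::real.
    d \<ge> 1 \<longrightarrow> 0 < \<epsilon> \<longrightarrow> \<epsilon> \<le> 1/2 \<longrightarrow>
    (\<forall>A :: real \<Rightarrow> real \<Rightarrow> (nat \<Rightarrow> real) measure \<Rightarrow> (nat \<Rightarrow> real) measure.
      (\<forall>e s D'. distr_on d D' \<longrightarrow> distr_on d (A e s D')) \<longrightarrow>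
      (\<exists>\<sigma>::real. \<exists>D D'. \<sigma> > 0 \<and>
         distr_on d D \<and> finite_second_moments d D \<and> cov_le d D (\<sigma>\<^sup>2) \<and>
         distr_on d D' \<and> tv D D' \<le> \<epsilon> \<and>
         (\<integral>\<^sup>+ y. ennreal (vdist d y (mean d D)) \<partial>(A \<epsilon> (\<sigma>\<^sup>2) D'))
           \<ge> ennreal (jung d * (1 - c * \<epsilon>) * sqrt (2 * \<sigma>\<^sup>2 * \<epsilon>))))"
proof (rule exI[of _ 2], intro allI impI)
  fix d :: nat and \<epsilon> :: real and A :: "real \<Rightarrow> real \<Rightarrow> (nat \<Rightarrow> real) measure \<Rightarrow> (nat \<Rightarrow> real) measure"
  assume d: "1 \<le> d" and \<epsilon>: "0 < \<epsilon>" "\<epsilon> \<le> 1/2"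
    and A: "\<forall>e s D'. distr_on d D' \<longrightarrow> distr_on d (A e s D')"
  obtain m where m: "1 \<le> m" "m \<le> d" "real (m + 1) * \<epsilon> \<le> 1"
    and dim: "(1 - 2 * \<epsilon>) * sqrt (real d / (real d + 1)) \<le> sqrt (real m / (real m + 1))"
    using exists_simplex_dimension[OF d \<epsilon>] .
  define \<sigma> where "\<sigma> = sqrt \<epsilon>"
  have \<sigma>: "0 < \<sigma>" "\<sigma>\<^sup>2 = \<epsilon>"
    using \<epsilon> by (simp_all add: \<sigma>_def)
  define D' where "D' = signed_simplex d m \<epsilon> {}"
  have "distr_on d (A \<epsilon> (\<sigma>\<^sup>2) D')"
    using A by (simp add: D'_def distr_on_signed_simplex)
  then obtain k where "k \<le> m" and far: "ennreal (2 * \<epsilon> * sqrt (real m / (real m + 1)))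
      \<le> (\<integral>\<^sup>+ y. ennreal (vdist d y (mean d (signed_simplex d m \<epsilon> {k}))) \<partial>A \<epsilon> (\<sigma>\<^sup>2) D')"
    by (rule exists_far_signed_simplex_mean[OF m(1,2) less_imp_le[OF \<epsilon>(1)] m(3)])
  have "jung d * (1 - 2 * \<epsilon>) * sqrt (2 * \<sigma>\<^sup>2 * \<epsilon>) \<le> 2 * \<epsilon> * sqrt (real m / (real m + 1))"
    using jung_bound_le_simplex_radius[OF less_imp_le[OF \<epsilon>(1)] dim] by (simp add: \<sigma>(2) mult.assoc)
  then have "ennreal (jung d * (1 - 2 * \<epsilon>) * sqrt (2 * \<sigma>\<^sup>2 * \<epsilon>))
      \<le> (\<integral>\<^sup>+ y. ennreal (vdist d y (mean d (signed_simplex d m \<epsilon> {k}))) \<partial>A \<epsilon> (\<sigma>\<^sup>2) D')"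
    using far ennreal_leI order_trans by blast
  moreover have "tv (signed_simplex d m \<epsilon> {k}) D' \<le> \<epsilon>"
    using m \<epsilon> tv_signed_simplex_insert[of \<epsilon> m d k "{}"] by (simp add: D'_def)
  ultimately show "\<exists>\<sigma> D D'. \<sigma> > 0 \<and>
      distr_on d D \<and> finite_second_moments d D \<and> cov_le d D (\<sigma>\<^sup>2) \<and>
      distr_on d D' \<and> tv D D' \<le> \<epsilon> \<and>
      (\<integral>\<^sup>+ y. ennreal (vdist d y (mean d D)) \<partial>(A \<epsilon> (\<sigma>\<^sup>2) D'))
        \<ge> ennreal (jung d * (1 - 2 * \<epsilon>) * sqrt (2 * \<sigma>\<^sup>2 * \<epsilon>))"
    using \<sigma> m \<epsilon>
    by (intro exI[of _ \<sigma>] exI[of _ "signed_simplex d m \<epsilon> {k}"] exI[of _ D'])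
      (auto simp: D'_def distr_on_signed_simplex finite_second_moments_signed_simplex
        cov_le_signed_simplex)
qed

end
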